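(* Let $X\times G\xrightarrow{\alpha}X$ be a continuous right action of a locally compact Hausdorff group $G$ on a Hausdorff space $X$, and let $H\le G$ be a closed cocompact subgroup (i.e. $G/H$ is compact), with restricted action $\alpha^H$. Then for any closed $F\subseteq X$, $\alpha$ is $F$-proper if and only if $\alpha^H$ is $F$-proper; likewise $\alpha$ is Bourbaki-proper (respectively Palais-proper) if and only if $\alpha^H$ is.
   Context: For $A,B\subseteq X$ set $\langle A:B\rangle_\alpha:=\{g\in G: Bg\cap A\neq\emptyset\}$, and write $A\perp B$ if this set is relatively compact in $G$. The action is Bourbaki-proper if for all $x,x'\in X$ there are neighborhoods $V_x\ni x$, $V_{x'}\ni x'$ with $V_{x'}\perp V_x$. It is Palais-proper if for every $x\in X$ there is a neighborhood $V_x$ such that for every $x'\in X$ there is a neighborhood $V_{x'}$ with $V_x\perp V_{x'}$. For a closed $F\subseteq X$, the action is $F$-proper if for every $x\in X$ there are neighborhoods $V_x\ni x$ and $V_F\supseteq F$ (an open set containing $F$) with $V_F\perp V_x$. *)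

theory Defs
  imports "HOL-Analysis.Analysis"
begin

text \<open>The group G is a type of class topological_group_add (written additively,
not necessarily commutative).
Subgroups are handled via a carrier set S of group elements; the whole group is S = UNIV.\<close>

definition right_action :: "('x \<Rightarrow> 'g::group_add \<Rightarrow> 'x) \<Rightarrow> bool" where
  "right_action \<alpha> \<longleftrightarrow> (\<forall>x. \<alpha> x 0 = x) \<and> (\<forall>x g h. \<alpha> (\<alpha> x g) h = \<alpha> x (g + h))"

definition closed_subgroup :: "'g::topological_group_add set \<Rightarrow> bool" where
  "closed_subgroup H \<longleftrightarrow> 0 \<in> H \<and> (\<forall>g\<in>H. \<forall>h\<in>H. g + h \<in> H) \<and> (\<forall>g\<in>H. - g \<in> H) \<and> closed H"

definition cocompact :: "'g::topological_group_add set \<Rightarrow> bool" where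
  "cocompact H \<longleftrightarrow> (\<exists>Q :: 'g set topology.
      quotient_map (euclidean :: 'g topology) Q (\<lambda>g. (\<lambda>h. g + h) ` H) \<and> compact_space Q)"

definition transporter :: "'g set \<Rightarrow> ('x \<Rightarrow> 'g \<Rightarrow> 'x) \<Rightarrow> 'x set \<Rightarrow> 'x set \<Rightarrow> 'g set" where
  "transporter S \<alpha> A B = {g \<in> S. (\<lambda>b. \<alpha> b g) ` B \<inter> A \<noteq> {}}"

definition perp :: "'g::topological_space set \<Rightarrow> ('x \<Rightarrow> 'g \<Rightarrow> 'x) \<Rightarrow> 'x set \<Rightarrow> 'x set \<Rightarrow> bool" where
  "perp S \<alpha> A B \<longleftrightarrow> compact (S \<inter> closure (transporter S \<alpha> A B))"

definition F_proper :: "'g::topological_space set \<Rightarrow> ('x::topological_space \<Rightarrow> 'g \<Rightarrow> 'x) \<Rightarrow> 'x set \<Rightarrow> bool" where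
  "F_proper S \<alpha> F \<longleftrightarrow> (\<forall>x. \<exists>Vx VF. open Vx \<and> x \<in> Vx \<and> open VF \<and> F \<subseteq> VF \<and> perp S \<alpha> VF Vx)"

definition bourbaki_proper :: "'g::topological_space set \<Rightarrow> ('x::topological_space \<Rightarrow> 'g \<Rightarrow> 'x) \<Rightarrow> bool" where
  "bourbaki_proper S \<alpha> \<longleftrightarrow> (\<forall>x x'. \<exists>Vx Vx'. open Vx \<and> x \<in> Vx \<and> open Vx' \<and> x' \<in> Vx' \<and> perp S \<alpha> Vx' Vx)"

definition palais_proper :: "'g::topological_space set \<Rightarrow> ('x::topological_space \<Rightarrow> 'g \<Rightarrow> 'x) \<Rightarrow> bool" where
  "palais_proper S \<alpha> \<longleftrightarrow> (\<forall>x. \<exists>Vx. open Vx \<and> x \<in> Vx \<and>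
      (\<forall>x'. \<exists>Vx'. open Vx' \<and> x' \<in> Vx' \<and> perp S \<alpha> Vx Vx'))"

end

theory Submission
  imports Defs
begin

text \<open>Passing to H only shrinks transporter sets, so properness descends from G to H. Conversely,
as G is locally compact and G/H is compact, G = K + H for some compact K. Given x, cover the compact
set x K by finitely many neighbourhoods V(y) supplied by F-properness of the H-action, let W be their
union and U the intersection of the matching neighbourhoods of F. By the tube lemma some
neighbourhood X0 of x satisfies X0 K \<subseteq> W, whence \<langle>U:X0\<rangle> \<subseteq> K + \<langle>U:W\<rangle>, the latter transporter
taken within H, is relatively compact. Bourbaki- and Palais-properness are F-properness for all
singletons, resp. for some neighbourhood of each point.\<close>

lemma left_coset_eq_iff:
  fixes H :: "'g::topological_group_add set"
  assumes "closed_subgroup H"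
  shows "(+) g ` H = (+) u ` H \<longleftrightarrow> (\<exists>h\<in>H. g = u + h)"
proof
  assume "(+) g ` H = (+) u ` H"
  moreover have "g \<in> (+) g ` H"
    using assms unfolding closed_subgroup_def by (metis add.right_neutral image_eqI)
  ultimately show "\<exists>h\<in>H. g = u + h" by auto
next
  assume "\<exists>h\<in>H. g = u + h"
  then obtain h where h: "h \<in> H" "g = u + h" by blast
  have "(+) h ` H = H"
  proof
    show "(+) h ` H \<subseteq> H" using h(1) assms unfolding closed_subgroup_def by blast
    show "H \<subseteq> (+) h ` H"
    proof
      fix z assume "z \<in> H"
      then have "- h + z \<in> H" using h(1) assms unfolding closed_subgroup_def by blast
      then show "z \<in> (+) h ` H" by (rule rev_image_eqI) (simp add: add.assoc[symmetric])
    qed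
  qed
  then show "(+) g ` H = (+) u ` H"
    using h(2) by (metis (no_types, lifting) add.assoc image_cong image_image)
qed

lemma open_map_left_coset_projection:
  fixes H :: "'g::topological_group_add set"
  assumes H: "closed_subgroup H" and p: "quotient_map euclidean Q (\<lambda>g. (+) g ` H)"
  shows "open_map euclidean Q (\<lambda>g. (+) g ` H)"
  unfolding open_map_def
proof (intro allI impI)
  fix U :: "'g set"
  assume "openin euclidean U"
  have saturation: "{x \<in> topspace euclidean. (+) x ` H \<in> (\<lambda>g. (+) g ` H) ` U}
      = (\<Union>h\<in>H. (\<lambda>z. z - h) -` U)"
  proof (intro set_eqI)
    fix x
    have "(\<exists>u\<in>U. (+) x ` H = (+) u ` H) \<longleftrightarrow> (\<exists>h\<in>H. x - h \<in> U)"
      unfolding left_coset_eq_iff[OF H] by (metis add_diff_cancel diff_add_cancel)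
    then show "x \<in> {x \<in> topspace euclidean. (+) x ` H \<in> (\<lambda>g. (+) g ` H) ` U}
        \<longleftrightarrow> x \<in> (\<Union>h\<in>H. (\<lambda>z. z - h) -` U)"
      by (simp add: image_iff)
  qed
  have "open ((\<lambda>z. z - h) -` U)" for h
    using \<open>openin euclidean U\<close> by (intro open_vimage continuous_intros) simp
  then have "openin euclidean {x \<in> topspace euclidean. (+) x ` H \<in> (\<lambda>g. (+) g ` H) ` U}"
    unfolding saturation by auto
  moreover have "(\<lambda>g. (+) g ` H) ` U \<subseteq> topspace Q"
    using p unfolding quotient_map_def by auto
  ultimately show "openin Q ((\<lambda>g. (+) g ` H) ` U)"
    using p unfolding quotient_map_def by blast
qed

lemma compact_space_image_of_compactin:
  assumes "locally_compact_space X" "open_map X Y f" "f ` topspace X = topspace Y"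
    and "compact_space Y"
  obtains K where "compactin X K" "f ` K = topspace Y"
proof -
  obtain U C where UC: "\<And>x. x \<in> topspace X \<Longrightarrow>
      openin X (U x) \<and> compactin X (C x) \<and> x \<in> U x \<and> U x \<subseteq> C x"
    using assms(1) unfolding locally_compact_space_def by metis
  have opn: "\<forall>V\<in>(\<lambda>x. f ` U x) ` topspace X. openin Y V"
    using assms(2) UC unfolding open_map_def by blast
  have cov: "topspace Y \<subseteq> \<Union>((\<lambda>x. f ` U x) ` topspace X)"
  proof
    fix y
    assume "y \<in> topspace Y"
    then obtain x where "x \<in> topspace X" "y = f x"
      using assms(3) by blast
    then show "y \<in> \<Union>((\<lambda>x. f ` U x) ` topspace X)"
      using UC by blast
  qed
  have "\<exists>\<F>. finite \<F> \<and> \<F> \<subseteq> (\<lambda>x. f ` U x) ` topspace X \<and> topspace Y \<subseteq> \<Union>\<F>"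
    using assms(4) unfolding compact_space_def by (rule compactinD[OF _ _ cov]) (use opn in blast)
  then obtain E where E: "finite E" "E \<subseteq> topspace X" "topspace Y \<subseteq> (\<Union>x\<in>E. f ` U x)"
    by (metis finite_subset_image)
  show ?thesis
  proof
    show "compactin X (\<Union>x\<in>E. C x)"
      using E UC by (intro compactin_Union) auto
    have "(\<Union>x\<in>E. C x) \<subseteq> topspace X"
      using E(2) UC compactin_subset_topspace by blast
    then have "f ` (\<Union>x\<in>E. C x) \<subseteq> topspace Y"
      using assms(3) by blast
    moreover have "(\<Union>x\<in>E. f ` U x) \<subseteq> f ` (\<Union>x\<in>E. C x)"
      using E(2) UC by blast
    ultimately show "f ` (\<Union>x\<in>E. C x) = topspace Y"
      using E(3) by (meson order_trans subset_antisym)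
  qed
qed

lemma cocompact_compact_coset_representatives:
  fixes H :: "'g::topological_group_add set"
  assumes "locally_compact_space (euclidean :: 'g topology)" "closed_subgroup H" "cocompact H"
  obtains K where "compact K" "\<And>g. \<exists>k\<in>K. \<exists>h\<in>H. g = k + h"
proof -
  obtain Q where Q: "quotient_map euclidean Q (\<lambda>g. (+) g ` H)" "compact_space Q"
    using assms(3) unfolding cocompact_def by blast
  have onto: "(\<lambda>g. (+) g ` H) ` topspace euclidean = topspace Q"
    using Q(1) unfolding quotient_map_def by (rule conjunct1)
  then obtain K where K: "compactin euclidean K" "(\<lambda>g. (+) g ` H) ` K = topspace Q"
    using compact_space_image_of_compactin[OF assms(1) open_map_left_coset_projection[OF assms(2) Q(1)]
      _ Q(2)] by blast
  have "\<exists>k\<in>K. \<exists>h\<in>H. g = k + h" for g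
  proof -
    have "(+) g ` H \<in> (\<lambda>g. (+) g ` H) ` K"
      unfolding K(2) onto[symmetric] by simp
    then obtain k where "k \<in> K" "(+) g ` H = (+) k ` H"
      by blast
    then show ?thesis
      using left_coset_eq_iff[OF assms(2)] by blast
  qed
  then show ?thesis
    using K(1) that by simp
qed

lemma continuous_tube_lemma:
  fixes f :: "'a::topological_space \<Rightarrow> 'b::topological_space \<Rightarrow> 'c::topological_space"
  assumes "continuous_on UNIV (\<lambda>p. f (fst p) (snd p))" "compact K" "open W" "f x ` K \<subseteq> W"
  obtains X0 where "open X0" "x \<in> X0" "\<forall>b\<in>X0. \<forall>k\<in>K. f b k \<in> W"
proof -
  have "open ((\<lambda>p. f (fst p) (snd p)) -` W)"
    by (rule open_vimage[OF assms(3,1)])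
  moreover have "{x} \<times> K \<subseteq> (\<lambda>p. f (fst p) (snd p)) -` W"
    using assms(4) by (auto simp: image_subset_iff)
  ultimately have "\<exists>X0. x \<in> X0 \<and> open X0 \<and> X0 \<times> K \<subseteq> (\<lambda>p. f (fst p) (snd p)) -` W"
    by (rule Elementary_Topology.tube_lemma[OF assms(2)])
  then obtain X0 where X0: "x \<in> X0" "open X0" "X0 \<times> K \<subseteq> (\<lambda>p. f (fst p) (snd p)) -` W"
    by (elim exE conjE)
  show ?thesis
  proof (rule that[OF X0(2,1)], intro ballI)
    fix b k
    assume "b \<in> X0" "k \<in> K"
    then show "f b k \<in> W"
      using subsetD[OF X0(3), of "(b, k)"] by simp
  qed
qed

lemma mem_transporter:
  "g \<in> transporter S \<alpha> A B \<longleftrightarrow> g \<in> S \<and> (\<exists>b\<in>B. \<alpha> b g \<in> A)"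
  unfolding transporter_def by blast

lemma perp_mono:
  assumes "perp S \<alpha> A' B'" "A \<subseteq> A'" "B \<subseteq> B'"
  shows "perp S \<alpha> A B"
proof -
  have "transporter S \<alpha> A B \<subseteq> transporter S \<alpha> A' B'"
    using assms(2,3) unfolding subset_iff mem_transporter by blast
  then have "S \<inter> closure (transporter S \<alpha> A B)
      = (S \<inter> closure (transporter S \<alpha> A' B')) \<inter> closure (transporter S \<alpha> A B)"
    using closure_mono by blast
  then show ?thesis
    using assms(1) unfolding perp_def by (metis compact_Int_closed closed_closure)
qed

lemma perp_restrict:
  assumes "perp S' \<alpha> A B" "closed S" "S \<subseteq> S'"
  shows "perp S \<alpha> A B"
proof -
  have "transporter S \<alpha> A B \<subseteq> transporter S' \<alpha> A B"
    using assms(3) by (auto simp: mem_transporter)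
  then have "S \<inter> closure (transporter S \<alpha> A B)
      = (S' \<inter> closure (transporter S' \<alpha> A B)) \<inter> (S \<inter> closure (transporter S \<alpha> A B))"
    using assms(3) closure_mono by blast
  then show ?thesis
    using assms(1,2) unfolding perp_def by (metis compact_Int_closed closed_Int closed_closure)
qed

lemma perp_INT_UN:
  assumes "finite D" "\<And>y. y \<in> D \<Longrightarrow> perp S \<alpha> (A y) (B y)"
  shows "perp S \<alpha> (\<Inter>y\<in>D. A y) (\<Union>y\<in>D. B y)"
proof -
  let ?T = "transporter S \<alpha> (\<Inter>y\<in>D. A y) (\<Union>y\<in>D. B y)"
  define C where "C = (\<Union>y\<in>D. S \<inter> closure (transporter S \<alpha> (A y) (B y)))"
  have "compact C"
    using assms unfolding C_def perp_def by blast
  have "?T \<subseteq> (\<Union>y\<in>D. transporter S \<alpha> (A y) (B y))"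
  proof
    fix g
    assume "g \<in> ?T"
    then obtain b where b: "g \<in> S" "b \<in> (\<Union>y\<in>D. B y)" "\<alpha> b g \<in> (\<Inter>y\<in>D. A y)"
      unfolding mem_transporter by blast
    then obtain y where y: "y \<in> D" "b \<in> B y" "\<alpha> b g \<in> A y"
      by blast
    then have "g \<in> transporter S \<alpha> (A y) (B y)"
      using b(1) unfolding mem_transporter by blast
    then show "g \<in> (\<Union>y\<in>D. transporter S \<alpha> (A y) (B y))"
      using y(1) by blast
  qed
  also have "\<dots> \<subseteq> (\<Union>y\<in>D. closure (transporter S \<alpha> (A y) (B y)))"
    using closure_subset by (rule UN_mono[OF order_refl])
  finally have "?T \<subseteq> (\<Union>y\<in>D. closure (transporter S \<alpha> (A y) (B y)))" .
  then have "closure ?T \<subseteq> (\<Union>y\<in>D. closure (transporter S \<alpha> (A y) (B y)))"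
    using assms(1) by (intro closure_minimal closed_UN) auto
  then have "S \<inter> closure ?T = C \<inter> closure ?T"
    unfolding C_def by blast
  then show ?thesis
    using \<open>compact C\<close> unfolding perp_def by (simp add: compact_Int_closed)
qed

lemma perp_UNIV_if_perp_subgroup:
  fixes \<alpha> :: "'x \<Rightarrow> 'g::{topological_group_add, t2_space} \<Rightarrow> 'x"
  assumes "right_action \<alpha>" "compact K" "\<And>g. \<exists>k\<in>K. \<exists>h\<in>H. g = k + h"
    and "\<forall>b\<in>B. \<forall>k\<in>K. \<alpha> b k \<in> W" "perp H \<alpha> A W"
  shows "perp UNIV \<alpha> A B"
proof -
  define L where "L = H \<inter> closure (transporter H \<alpha> A W)"
  define M where "M = (\<lambda>p. fst p + snd p) ` (K \<times> L)"
  have "compact L"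
    using assms(5) unfolding L_def perp_def .
  then have "compact M"
    unfolding M_def by (intro compact_continuous_image compact_Times assms(2) continuous_intros)
  have "transporter UNIV \<alpha> A B \<subseteq> M"
  proof
    fix g assume "g \<in> transporter UNIV \<alpha> A B"
    then obtain b where b: "b \<in> B" "\<alpha> b g \<in> A"
      unfolding mem_transporter by blast
    obtain k h where kh: "k \<in> K" "h \<in> H" "g = k + h"
      using assms(3) by blast
    have "\<alpha> (\<alpha> b k) h \<in> A"
      using b(2) assms(1) kh(3) unfolding right_action_def by simp
    moreover have "\<alpha> b k \<in> W"
      using assms(4) b(1) kh(1) by blast
    ultimately have "h \<in> transporter H \<alpha> A W"
      using kh(2) unfolding mem_transporter by blast
    then have "h \<in> L"
      using kh(2) closure_subset unfolding L_def by blast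
    then show "g \<in> M"
      using kh unfolding M_def by force
  qed
  then have "closure (transporter UNIV \<alpha> A B) \<subseteq> M"
    using \<open>compact M\<close> by (intro closure_minimal compact_imp_closed)
  then have "compact (closure (transporter UNIV \<alpha> A B))"
    using \<open>compact M\<close> by (metis Int_absorb1 closed_closure compact_Int_closed)
  then show ?thesis
    unfolding perp_def by simp
qed

lemma F_proper_UNIV_if_F_proper_subgroup:
  fixes \<alpha> :: "'x::topological_space \<Rightarrow> 'g::{topological_group_add, t2_space} \<Rightarrow> 'x"
  assumes "right_action \<alpha>" "continuous_on UNIV (\<lambda>p. \<alpha> (fst p) (snd p))"
    and "compact K" "\<And>g. \<exists>k\<in>K. \<exists>h\<in>H. g = k + h"
    and "F_proper H \<alpha> F"
  shows "F_proper UNIV \<alpha> F"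
  unfolding F_proper_def
proof
  fix x
  obtain V U where VU: "\<And>y. open (V y) \<and> y \<in> V y \<and> open (U y) \<and> F \<subseteq> U y \<and> perp H \<alpha> (U y) (V y)"
    using assms(5) unfolding F_proper_def by metis
  have "continuous_on K (\<alpha> x)"
    using continuous_on_compose2[OF assms(2), of K "\<lambda>k. (x, k)"] by (simp add: continuous_intros)
  then have "compact (\<alpha> x ` K)"
    using assms(3) by (rule compact_continuous_image)
  then obtain D where D: "D \<subseteq> \<alpha> x ` K" "finite D" "\<alpha> x ` K \<subseteq> (\<Union>y\<in>D. V y)"
    by (rule compactE_image[where C="\<alpha> x ` K" and f=V]) (use VU in auto)
  have "open (\<Union>y\<in>D. V y)"
    using VU by blast
  then obtain X0 where X0: "open X0" "x \<in> X0" "\<forall>b\<in>X0. \<forall>k\<in>K. \<alpha> b k \<in> (\<Union>y\<in>D. V y)"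
    using continuous_tube_lemma[OF assms(2,3) _ D(3)] by blast
  have "perp H \<alpha> (\<Inter>y\<in>D. U y) (\<Union>y\<in>D. V y)"
    using D(2) VU by (intro perp_INT_UN) auto
  then have "perp UNIV \<alpha> (\<Inter>y\<in>D. U y) X0"
    using perp_UNIV_if_perp_subgroup[OF assms(1,3,4) X0(3)] by blast
  moreover have "open (\<Inter>y\<in>D. U y)" "F \<subseteq> (\<Inter>y\<in>D. U y)"
    using D(2) VU by auto
  ultimately show "\<exists>Vx VF. open Vx \<and> x \<in> Vx \<and> open VF \<and> F \<subseteq> VF \<and> perp UNIV \<alpha> VF Vx"
    using X0(1,2) by blast
qed

lemma F_proper_subgroup_if_F_proper_UNIV:
  assumes "F_proper UNIV \<alpha> F" "closed H"
  shows "F_proper H \<alpha> F"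
  unfolding F_proper_def
proof
  fix x
  obtain V U where VU: "open V" "x \<in> V" "open U" "F \<subseteq> U" "perp UNIV \<alpha> U V"
    using assms(1)[unfolded F_proper_def, rule_format, of x] by blast
  then have "perp H \<alpha> U V"
    using perp_restrict[OF _ assms(2)] by blast
  then show "\<exists>Vx VF. open Vx \<and> x \<in> Vx \<and> open VF \<and> F \<subseteq> VF \<and> perp H \<alpha> VF Vx"
    using VU(1-4) by blast
qed

lemma bourbaki_proper_iff_F_proper_singletons:
  "bourbaki_proper S \<alpha> \<longleftrightarrow> (\<forall>x'. F_proper S \<alpha> {x'})"
  unfolding bourbaki_proper_def F_proper_def by auto

lemma palais_proper_iff_F_proper_neighbourhood:
  "palais_proper S \<alpha> \<longleftrightarrow> (\<forall>x. \<exists>V. open V \<and> x \<in> V \<and> F_proper S \<alpha> V)"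
  unfolding palais_proper_def F_proper_def by (meson order_refl perp_mono)

theorem lemma2p5:
  fixes \<alpha> :: "'x::t2_space \<Rightarrow> 'g::{topological_group_add, t2_space} \<Rightarrow> 'x"
    and H :: "'g set"
  assumes "locally_compact_space (euclidean :: 'g topology)"
    and "right_action \<alpha>"
    and "continuous_on UNIV (\<lambda>p. \<alpha> (fst p) (snd p))"
    and "closed_subgroup H"
    and "cocompact H"
  shows "(\<forall>F. closed F \<longrightarrow> (F_proper UNIV \<alpha> F \<longleftrightarrow> F_proper H \<alpha> F))
    \<and> (bourbaki_proper UNIV \<alpha> \<longleftrightarrow> bourbaki_proper H \<alpha>)
    \<and> (palais_proper UNIV \<alpha> \<longleftrightarrow> palais_proper H \<alpha>)"
proof -
  obtain K where "compact K" "\<And>g. \<exists>k\<in>K. \<exists>h\<in>H. g = k + h"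
    using cocompact_compact_coset_representatives[OF assms(1,4,5)] by blast
  moreover have "closed H"
    using assms(4) unfolding closed_subgroup_def by blast
  ultimately have "F_proper UNIV \<alpha> F \<longleftrightarrow> F_proper H \<alpha> F" for F
    using F_proper_UNIV_if_F_proper_subgroup[OF assms(2,3)] F_proper_subgroup_if_F_proper_UNIV
    by blast
  then show ?thesis
    unfolding bourbaki_proper_iff_F_proper_singletons palais_proper_iff_F_proper_neighbourhood
    by simp
qed

end
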